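(* Let $A$ be an AUF algebra, $B$ a unital algebra, and $M$ an $A$-$B$ bimodule that is coherent and projective as a left $A$-module. Let $p\in B$ be an idempotent and $\psi\in\mathrm{SLF}(A)$. Let ${}^\psi\mathrm{Tr}_M:B\to\mathbb C$ be the right pseudotrace associated to $M$, and ${}^\psi\mathrm{Tr}_{Mp}:pBp\to\mathbb C$ the right pseudotrace associated to the $A$-$(pBp)$ bimodule $Mp$. Then ${}^\psi\mathrm{Tr}_{Mp}={}^\psi\mathrm{Tr}_M|_{pBp}$.
   Context: All algebras are associative $\mathbb C$-algebras, not necessarily unital. An idempotent is $e$ with $e^2=e$. An algebra $A$ is AUF if there is a family $(e_i)_{i\in\mathfrak I}$ of mutually orthogonal idempotents with $\dim e_iAe_j<\infty$ and $A=\sum_{i,j}e_iAe_j$. A left $A$-module is quasicoherent if $\xi\in A\xi$ for all $\xi$, coherent if moreover finitely generated. $\mathrm{SLF}(C)$ is the space of linear $\phi:C\to\mathbb C$ with $\phi(xy)=\phi(yx)$. $Mp=\{\xi p:\xi\in M\}$, a left $A$-submodule and direct summand of $M$, with right action of the unital algebra $pBp$. For an $A$-$B'$ bimodule $N$ ($B'$ unital) that is coherent and projective as a left $A$-module, a right coordinate system is an idempotent $e\in A$ with finitely many left $A$-module maps $\beta_j:Ae\to N$, $\check\beta^j:N\to Ae$ such that $\sum_j\beta_j\circ\check\beta^j=\mathrm{id}_N$ (one exists), and the right pseudotrace is ${}^\psi\mathrm{Tr}_N(y)=\sum_j\psi(\check\beta^j(\beta_j(e)y))$ for $y\in B'$,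 independent of the choice. *)

theory Defs
  imports Complex_Main
begin

text \<open>Complex algebras are types of class ring (not necessarily unital) together with an
explicit scalar multiplication by complex numbers.\<close>

definition alg :: "(complex \<Rightarrow> 'a::ring \<Rightarrow> 'a) \<Rightarrow> bool" where
  "alg sc \<longleftrightarrow>
     (\<forall>c x y. sc c (x + y) = sc c x + sc c y) \<and> (\<forall>c d x. sc (c + d) x = sc c x + sc d x) \<and>
     (\<forall>c d x. sc (c * d) x = sc c (sc d x)) \<and> (\<forall>x. sc 1 x = x) \<and>
     (\<forall>c x y. sc c (x * y) = sc c x * y \<and> sc c (x * y) = x * sc c y)"

definition fin_dim :: "(complex \<Rightarrow> 'v \<Rightarrow> 'v::ab_group_add) \<Rightarrow> 'v set \<Rightarrow> bool" where
  "fin_dim sc V \<longleftrightarrow> (\<exists>S. finite S \<and> S \<subseteq> V \<and> (\<forall>v\<in>V. \<exists>c. v = (\<Sum>s\<in>S. sc (c s) s)))"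

text \<open>AUF algebra: a family (here a set; repeated members of an orthogonal family of
idempotents are necessarily 0) of mutually orthogonal idempotents with finite-dimensional
corners eAf whose sum is A.\<close>
definition AUF :: "(complex \<Rightarrow> 'a::ring \<Rightarrow> 'a) \<Rightarrow> bool" where
  "AUF sc \<longleftrightarrow> alg sc \<and>
     (\<exists>E::'a set. (\<forall>e\<in>E. e * e = e) \<and> (\<forall>e\<in>E. \<forall>f\<in>E. e \<noteq> f \<longrightarrow> e * f = 0) \<and>
        (\<forall>e\<in>E. \<forall>f\<in>E. fin_dim sc {e * x * f | x. True}) \<and>
        (\<forall>x. \<exists>F y. finite F \<and> F \<subseteq> E \<times> E \<and> x = (\<Sum>(e, f)\<in>F. e * y e f * f)))"

definition SLF :: "(complex \<Rightarrow> 'a::ring \<Rightarrow> 'a) \<Rightarrow> ('a \<Rightarrow> complex) set" where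
  "SLF sc = {\<psi>. (\<forall>x y. \<psi> (x + y) = \<psi> x + \<psi> y) \<and> (\<forall>c x. \<psi> (sc c x) = c * \<psi> x) \<and>
                 (\<forall>x y. \<psi> (x * y) = \<psi> (y * x))}"

definition lmod :: "(complex \<Rightarrow> 'a::ring \<Rightarrow> 'a) \<Rightarrow> 'x set \<Rightarrow> ('x \<Rightarrow> 'x \<Rightarrow> 'x) \<Rightarrow> 'x \<Rightarrow>
    (complex \<Rightarrow> 'x \<Rightarrow> 'x) \<Rightarrow> ('a \<Rightarrow> 'x \<Rightarrow> 'x) \<Rightarrow> bool" where
  "lmod scA X add z sc act \<longleftrightarrow>
     z \<in> X \<and> (\<forall>x\<in>X. \<forall>y\<in>X. add x y \<in> X) \<and> (\<forall>c. \<forall>x\<in>X. sc c x \<in> X) \<and>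
     (\<forall>a. \<forall>x\<in>X. act a x \<in> X) \<and>
     (\<forall>x\<in>X. \<forall>y\<in>X. \<forall>w\<in>X. add (add x y) w = add x (add y w)) \<and>
     (\<forall>x\<in>X. \<forall>y\<in>X. add x y = add y x) \<and> (\<forall>x\<in>X. add z x = x) \<and>
     (\<forall>x\<in>X. \<exists>y\<in>X. add x y = z) \<and>
     (\<forall>c. \<forall>x\<in>X. \<forall>y\<in>X. sc c (add x y) = add (sc c x) (sc c y)) \<and>
     (\<forall>c d. \<forall>x\<in>X. sc (c + d) x = add (sc c x) (sc d x)) \<and>
     (\<forall>c d. \<forall>x\<in>X. sc (c * d) x = sc c (sc d x)) \<and> (\<forall>x\<in>X. sc 1 x = x) \<and>
     (\<forall>a b. \<forall>x\<in>X. act (a + b) x = add (act a x) (act b x)) \<and>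
     (\<forall>a. \<forall>x\<in>X. \<forall>y\<in>X. act a (add x y) = add (act a x) (act a y)) \<and>
     (\<forall>a b. \<forall>x\<in>X. act (a * b) x = act a (act b x)) \<and>
     (\<forall>c a. \<forall>x\<in>X. act (scA c a) x = sc c (act a x) \<and> act a (sc c x) = sc c (act a x))"

definition lhom :: "'x set \<Rightarrow> ('x \<Rightarrow> 'x \<Rightarrow> 'x) \<Rightarrow> (complex \<Rightarrow> 'x \<Rightarrow> 'x) \<Rightarrow> ('a \<Rightarrow> 'x \<Rightarrow> 'x) \<Rightarrow>
    'y set \<Rightarrow> ('y \<Rightarrow> 'y \<Rightarrow> 'y) \<Rightarrow> (complex \<Rightarrow> 'y \<Rightarrow> 'y) \<Rightarrow> ('a \<Rightarrow> 'y \<Rightarrow> 'y) \<Rightarrow>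
    ('x \<Rightarrow> 'y) \<Rightarrow> bool" where
  "lhom X addX scX actX Y addY scY actY f \<longleftrightarrow>
     f ` X \<subseteq> Y \<and> (\<forall>x\<in>X. \<forall>y\<in>X. f (addX x y) = addY (f x) (f y)) \<and>
     (\<forall>c. \<forall>x\<in>X. f (scX c x) = scY c (f x)) \<and> (\<forall>a. \<forall>x\<in>X. f (actX a x) = actY a (f x))"

text \<open>Projectivity as a left A-module (lifting property), where the test modules X, Y
range over all left A-modules whose carriers live in the type 'x (given by the TYPE
argument).\<close>
definition lproj :: "(complex \<Rightarrow> 'a::ring \<Rightarrow> 'a) \<Rightarrow> 'm set \<Rightarrow> ('m \<Rightarrow> 'm \<Rightarrow> 'm) \<Rightarrow> 'm \<Rightarrow>
    (complex \<Rightarrow> 'm \<Rightarrow> 'm) \<Rightarrow> ('a \<Rightarrow> 'm \<Rightarrow> 'm) \<Rightarrow> 'x itself \<Rightarrow> bool" where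
  "lproj scA N addN zN scN actN (T::'x itself) \<longleftrightarrow>
     (\<forall>(X::'x set) addX zX scX actX (Y::'x set) addY zY scY actY g f.
        lmod scA X addX zX scX actX \<and> lmod scA Y addY zY scY actY \<and>
        lhom X addX scX actX Y addY scY actY g \<and> g ` X = Y \<and>
        lhom N addN scN actN Y addY scY actY f \<longrightarrow>
        (\<exists>h. lhom N addN scN actN X addX scX actX h \<and> (\<forall>\<xi>\<in>N. g (h \<xi>) = f \<xi>)))"

definition gen_lmod :: "(complex \<Rightarrow> 'a::ring \<Rightarrow> 'a) \<Rightarrow> (complex \<Rightarrow> 'm::ab_group_add \<Rightarrow> 'm) \<Rightarrow>
    ('a \<Rightarrow> 'm \<Rightarrow> 'm) \<Rightarrow> 'm set \<Rightarrow> 'm set" where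
  "gen_lmod scA scM act G = \<Inter>{Y. G \<subseteq> Y \<and> lmod scA Y (+) 0 scM act}"

definition quasicoherent :: "('a \<Rightarrow> 'm \<Rightarrow> 'm) \<Rightarrow> 'm set \<Rightarrow> bool" where
  "quasicoherent act N \<longleftrightarrow> (\<forall>\<xi>\<in>N. \<exists>a. act a \<xi> = \<xi>)"

definition coherent :: "(complex \<Rightarrow> 'a::ring \<Rightarrow> 'a) \<Rightarrow> (complex \<Rightarrow> 'm::ab_group_add \<Rightarrow> 'm) \<Rightarrow>
    ('a \<Rightarrow> 'm \<Rightarrow> 'm) \<Rightarrow> 'm set \<Rightarrow> bool" where
  "coherent scA scM act N \<longleftrightarrow> lmod scA N (+) 0 scM act \<and> quasicoherent act N \<and>
     (\<exists>G. finite G \<and> G \<subseteq> N \<and> N = gen_lmod scA scM act G)"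

definition bimod :: "(complex \<Rightarrow> 'a::ring \<Rightarrow> 'a) \<Rightarrow> (complex \<Rightarrow> 'b::ring_1 \<Rightarrow> 'b) \<Rightarrow>
    (complex \<Rightarrow> 'm::ab_group_add \<Rightarrow> 'm) \<Rightarrow> ('a \<Rightarrow> 'm \<Rightarrow> 'm) \<Rightarrow> ('m \<Rightarrow> 'b \<Rightarrow> 'm) \<Rightarrow> bool" where
  "bimod scA scB scM act ract \<longleftrightarrow> lmod scA UNIV (+) 0 scM act \<and>
     (\<forall>x. ract x 1 = x) \<and> (\<forall>x b b'. ract x (b * b') = ract (ract x b) b') \<and>
     (\<forall>x y b. ract (x + y) b = ract x b + ract y b) \<and>
     (\<forall>x b b'. ract x (b + b') = ract x b + ract x b') \<and>
     (\<forall>c x b. ract (scM c x) b = scM c (ract x b) \<and> ract x (scB c b) = scM c (ract x b)) \<and>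
     (\<forall>a x b. act a (ract x b) = ract (act a x) b)"

text \<open>Right coordinate system of a left A-module N (carrier in the ambient type 'm):
an idempotent e and finitely many module maps beta_j : Ae -> N, checkbeta_j : N -> Ae
with sum_j beta_j o checkbeta_j = id_N.\<close>
definition rcoord :: "(complex \<Rightarrow> 'a::ring \<Rightarrow> 'a) \<Rightarrow> (complex \<Rightarrow> 'm::ab_group_add \<Rightarrow> 'm) \<Rightarrow>
    ('a \<Rightarrow> 'm \<Rightarrow> 'm) \<Rightarrow> 'm set \<Rightarrow> 'a \<Rightarrow> ('a \<Rightarrow> 'm) list \<Rightarrow> ('m \<Rightarrow> 'a) list \<Rightarrow> bool" where
  "rcoord scA scM act N e \<beta> \<beta>c \<longleftrightarrow> e * e = e \<and> length \<beta> = length \<beta>c \<and>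
     (\<forall>j < length \<beta>.
        lhom {a * e | a. True} (+) scA (*) N (+) scM act (\<beta> ! j) \<and>
        lhom N (+) scM act {a * e | a. True} (+) scA (*) (\<beta>c ! j)) \<and>
     (\<forall>\<xi>\<in>N. (\<Sum>j<length \<beta>. (\<beta> ! j) ((\<beta>c ! j) \<xi>)) = \<xi>)"

text \<open>Right pseudotrace (computed from some coordinate system; the paper shows it is
independent of the choice).\<close>
definition rptrace :: "(complex \<Rightarrow> 'a::ring \<Rightarrow> 'a) \<Rightarrow> (complex \<Rightarrow> 'm::ab_group_add \<Rightarrow> 'm) \<Rightarrow>
    ('a \<Rightarrow> 'm \<Rightarrow> 'm) \<Rightarrow> ('m \<Rightarrow> 'b \<Rightarrow> 'm) \<Rightarrow> 'm set \<Rightarrow> ('a \<Rightarrow> complex) \<Rightarrow> 'b \<Rightarrow> complex" where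
  "rptrace scA scM act ract N \<psi> = (SOME T. \<exists>e \<beta> \<beta>c. rcoord scA scM act N e \<beta> \<beta>c \<and>
      T = (\<lambda>y. \<Sum>j<length \<beta>. \<psi> ((\<beta>c ! j) (ract ((\<beta> ! j) e) y))))"

end

theory Submission
  imports Defs
begin

(*
  A right coordinate system (e, beta_j, checkbeta^j) of M restricts to one of Mp: the maps
  a |-> beta_j(a) p together with the restrictions of checkbeta^j still satisfy
  sum_j beta_j(checkbeta^j xi) p = xi p = xi on Mp. For y in pBp we have p y = y, so the terms
  psi(checkbeta^j(beta_j(e) p y)) computing the trace for Mp are exactly those computing it for M.
  As rptrace uses an arbitrary coordinate system, two facts remain: the trace does not depend on
  the system (expand through a second system and use psi(u v) = psi(v u)), and M has a system at
  all (the AUF structure gives an idempotent e fixing finitely many generators G of M, and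
  projectivity splits the surjection from the free module (Ae)^G onto M).
*)

section \<open>Coordinate systems and the traces they compute\<close>

lemma sum_mem_add_closed:
  fixes N :: "'m::comm_monoid_add set"
  assumes "0 \<in> N" and "\<And>x y. x \<in> N \<Longrightarrow> y \<in> N \<Longrightarrow> x + y \<in> N" and "\<And>i. i \<in> I \<Longrightarrow> t i \<in> N"
  shows "(\<Sum>i\<in>I. t i) \<in> N"
  using assms(3) by (induction I rule: infinite_finite_induct) (simp_all add: assms(1,2))

lemma additive_on_sum:
  fixes N :: "'m::comm_monoid_add set" and F :: "'m \<Rightarrow> 'n::ab_group_add"
  assumes N0: "0 \<in> N" and Nadd: "\<And>x y. x \<in> N \<Longrightarrow> y \<in> N \<Longrightarrow> x + y \<in> N"
    and Fadd: "\<And>x y. x \<in> N \<Longrightarrow> y \<in> N \<Longrightarrow> F (x + y) = F x + F y"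
    and t: "\<And>i. i \<in> I \<Longrightarrow> t i \<in> N"
  shows "F (\<Sum>i\<in>I. t i) = (\<Sum>i\<in>I. F (t i))"
proof -
  have "F 0 = 0" using Fadd[OF N0 N0] by simp
  with t show ?thesis
    by (induction I rule: infinite_finite_induct) (simp_all add: Fadd sum_mem_add_closed[OF N0 Nadd])
qed

lemma SLF_add: "\<psi> \<in> SLF sc \<Longrightarrow> \<psi> (x + y) = \<psi> x + \<psi> y"
  by (simp add: SLF_def)

lemma SLF_commute: "\<psi> \<in> SLF sc \<Longrightarrow> \<psi> (x * y) = \<psi> (y * x)"
  by (simp add: SLF_def)

abbreviation left_ideal :: "'a::ring \<Rightarrow> 'a set" where
  "left_ideal e \<equiv> {a * e | a. True}"

lemma idem_in_left_ideal: "e * e = e \<Longrightarrow> e \<in> left_ideal e"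
  by (auto intro!: exI[of _ e])

context
  fixes scA :: "complex \<Rightarrow> 'a::ring \<Rightarrow> 'a" and scM :: "complex \<Rightarrow> 'm::ab_group_add \<Rightarrow> 'm"
    and act :: "'a \<Rightarrow> 'm \<Rightarrow> 'm" and N :: "'m set"
    and e :: 'a and \<beta> :: "('a \<Rightarrow> 'm) list" and \<beta>c :: "('m \<Rightarrow> 'a) list"
  assumes coord: "rcoord scA scM act N e \<beta> \<beta>c"
begin

lemma rcoord_idem: "e * e = e"
  using coord by (simp add: rcoord_def)

lemma rcoord_coord_lhom: "j < length \<beta> \<Longrightarrow> lhom (left_ideal e) (+) scA (*) N (+) scM act (\<beta>!j)"
  using coord by (simp add: rcoord_def)

lemma rcoord_dual_lhom: "j < length \<beta> \<Longrightarrow> lhom N (+) scM act (left_ideal e) (+) scA (*) (\<beta>c!j)"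
  using coord by (simp add: rcoord_def)

lemma rcoord_coord_mem: "j < length \<beta> \<Longrightarrow> x \<in> left_ideal e \<Longrightarrow> (\<beta>!j) x \<in> N"
  using rcoord_coord_lhom unfolding lhom_def by blast

lemma rcoord_coord_idem_mem: "j < length \<beta> \<Longrightarrow> (\<beta>!j) e \<in> N"
  by (rule rcoord_coord_mem[OF _ idem_in_left_ideal[OF rcoord_idem]])

lemma rcoord_coord_apply:
  assumes "j < length \<beta>" and "x \<in> left_ideal e"
  shows "(\<beta>!j) x = act x ((\<beta>!j) e)"
proof -
  have "\<forall>a. \<forall>x\<in>left_ideal e. (\<beta>!j) (a * x) = act a ((\<beta>!j) x)"
    using rcoord_coord_lhom[OF assms(1)] unfolding lhom_def by blast
  then have "(\<beta>!j) (x * e) = act x ((\<beta>!j) e)"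
    using idem_in_left_ideal[OF rcoord_idem] by blast
  moreover have "x * e = x"
    using assms(2) rcoord_idem by (auto simp: mult.assoc)
  ultimately show ?thesis by simp
qed

lemma rcoord_dual_mem: "j < length \<beta> \<Longrightarrow> \<xi> \<in> N \<Longrightarrow> (\<beta>c!j) \<xi> \<in> left_ideal e"
  using rcoord_dual_lhom unfolding lhom_def by blast

lemma rcoord_dual_add:
  "j < length \<beta> \<Longrightarrow> \<xi> \<in> N \<Longrightarrow> \<eta> \<in> N \<Longrightarrow> (\<beta>c!j) (\<xi> + \<eta>) = (\<beta>c!j) \<xi> + (\<beta>c!j) \<eta>"
  using rcoord_dual_lhom unfolding lhom_def by blast

lemma rcoord_dual_act: "j < length \<beta> \<Longrightarrow> \<xi> \<in> N \<Longrightarrow> (\<beta>c!j) (act a \<xi>) = a * (\<beta>c!j) \<xi>"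
  using rcoord_dual_lhom unfolding lhom_def by blast

lemma rcoord_reconstruct: "\<xi> \<in> N \<Longrightarrow> (\<Sum>j<length \<beta>. (\<beta>!j) ((\<beta>c!j) \<xi>)) = \<xi>"
  using coord unfolding rcoord_def by blast

lemma rcoord_expand:
  fixes F :: "'m \<Rightarrow> 'n::ab_group_add"
  assumes N0: "0 \<in> N" and Nadd: "\<And>x y. x \<in> N \<Longrightarrow> y \<in> N \<Longrightarrow> x + y \<in> N"
    and Fadd: "\<And>x y. x \<in> N \<Longrightarrow> y \<in> N \<Longrightarrow> F (x + y) = F x + F y" and "\<xi> \<in> N"
  shows "F \<xi> = (\<Sum>j<length \<beta>. F ((\<beta>!j) ((\<beta>c!j) \<xi>)))"
proof -
  have "F \<xi> = F (\<Sum>j<length \<beta>. (\<beta>!j) ((\<beta>c!j) \<xi>))"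
    using \<open>\<xi> \<in> N\<close> by (simp add: rcoord_reconstruct)
  also have "\<dots> = (\<Sum>j<length \<beta>. F ((\<beta>!j) ((\<beta>c!j) \<xi>)))"
  proof (rule additive_on_sum[where N = N])
    fix j assume "j \<in> {..<length \<beta>}"
    then show "(\<beta>!j) ((\<beta>c!j) \<xi>) \<in> N"
      by (intro rcoord_coord_mem rcoord_dual_mem) (simp_all add: \<open>\<xi> \<in> N\<close>)
  qed (simp_all add: N0 Nadd Fadd)
  finally show ?thesis .
qed

end

definition coord_trace ::
    "('a \<Rightarrow> complex) \<Rightarrow> ('m \<Rightarrow> 'm) \<Rightarrow> 'a \<Rightarrow> ('a \<Rightarrow> 'm) list \<Rightarrow> ('m \<Rightarrow> 'a) list \<Rightarrow> complex" where
  "coord_trace \<psi> R e \<beta> \<beta>c = (\<Sum>j<length \<beta>. \<psi> ((\<beta>c!j) (R ((\<beta>!j) e))))"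

lemma coord_trace_indep:
  assumes c1: "rcoord scA scM act N e \<beta> \<beta>c" and c2: "rcoord scA scM act N f \<gamma> \<gamma>c"
    and \<psi>: "\<psi> \<in> SLF scA"
    and N0: "0 \<in> N" and Nadd: "\<And>x y. x \<in> N \<Longrightarrow> y \<in> N \<Longrightarrow> x + y \<in> N"
    and RN: "\<And>\<xi>. \<xi> \<in> N \<Longrightarrow> R \<xi> \<in> N"
    and Radd: "\<And>\<xi> \<eta>. \<xi> \<in> N \<Longrightarrow> \<eta> \<in> N \<Longrightarrow> R (\<xi> + \<eta>) = R \<xi> + R \<eta>"
    and Ract: "\<And>a \<xi>. \<xi> \<in> N \<Longrightarrow> R (act a \<xi>) = act a (R \<xi>)"
  shows "coord_trace \<psi> R e \<beta> \<beta>c = coord_trace \<psi> R f \<gamma> \<gamma>c"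
proof -
  note eN = rcoord_coord_idem_mem[OF c1] and fN = rcoord_coord_idem_mem[OF c2]
  have cyclic: "\<psi> ((\<beta>c!j) ((\<gamma>!k) ((\<gamma>c!k) (R ((\<beta>!j) e)))))
      = \<psi> ((\<gamma>c!k) (R ((\<beta>!j) ((\<beta>c!j) ((\<gamma>!k) f)))))"
    if j: "j < length \<beta>" and k: "k < length \<gamma>" for j k
  proof -
    \<comment> \<open>u \<in> Af and v \<in> Ae; the two sides are \<psi>(u v) and \<psi>(v u).\<close>
    define u where "u = (\<gamma>c!k) (R ((\<beta>!j) e))"
    define v where "v = (\<beta>c!j) ((\<gamma>!k) f)"
    have u: "u \<in> left_ideal f" unfolding u_def by (rule rcoord_dual_mem[OF c2 k RN[OF eN[OF j]]])
    have v: "v \<in> left_ideal e" unfolding v_def by (rule rcoord_dual_mem[OF c1 j fN[OF k]])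
    have "(\<beta>c!j) ((\<gamma>!k) u) = u * v"
      by (simp add: rcoord_coord_apply[OF c2 k u] rcoord_dual_act[OF c1 j fN[OF k]] v_def)
    moreover have "(\<gamma>c!k) (R ((\<beta>!j) v)) = v * u"
      by (simp add: rcoord_coord_apply[OF c1 j v] Ract eN[OF j] RN rcoord_dual_act[OF c2 k] u_def)
    ultimately show ?thesis
      using SLF_commute[OF \<psi>] unfolding u_def v_def by metis
  qed
  have "coord_trace \<psi> R e \<beta> \<beta>c
      = (\<Sum>j<length \<beta>. \<Sum>k<length \<gamma>. \<psi> ((\<beta>c!j) ((\<gamma>!k) ((\<gamma>c!k) (R ((\<beta>!j) e))))))"
    unfolding coord_trace_def
  proof (rule sum.cong[OF refl])
    fix j assume "j \<in> {..<length \<beta>}"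
    then have j: "j < length \<beta>" by simp
    show "\<psi> ((\<beta>c!j) (R ((\<beta>!j) e)))
        = (\<Sum>k<length \<gamma>. \<psi> ((\<beta>c!j) ((\<gamma>!k) ((\<gamma>c!k) (R ((\<beta>!j) e))))))"
      by (rule rcoord_expand[OF c2 N0 Nadd, where F = "\<lambda>\<xi>. \<psi> ((\<beta>c!j) \<xi>)"])
        (simp_all add: SLF_add[OF \<psi>] rcoord_dual_add[OF c1 j] RN eN j)
  qed
  also have "\<dots> = (\<Sum>j<length \<beta>. \<Sum>k<length \<gamma>. \<psi> ((\<gamma>c!k) (R ((\<beta>!j) ((\<beta>c!j) ((\<gamma>!k) f))))))"
    using cyclic by simp
  also have "\<dots> = (\<Sum>k<length \<gamma>. \<Sum>j<length \<beta>. \<psi> ((\<gamma>c!k) (R ((\<beta>!j) ((\<beta>c!j) ((\<gamma>!k) f))))))"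
    by (rule sum.swap)
  also have "\<dots> = coord_trace \<psi> R f \<gamma> \<gamma>c"
    unfolding coord_trace_def
  proof (rule sum.cong[OF refl])
    fix k assume "k \<in> {..<length \<gamma>}"
    then have k: "k < length \<gamma>" by simp
    show "(\<Sum>j<length \<beta>. \<psi> ((\<gamma>c!k) (R ((\<beta>!j) ((\<beta>c!j) ((\<gamma>!k) f))))))
        = \<psi> ((\<gamma>c!k) (R ((\<gamma>!k) f)))"
      by (rule rcoord_expand[OF c1 N0 Nadd, where F = "\<lambda>\<xi>. \<psi> ((\<gamma>c!k) (R \<xi>))", symmetric])
        (simp_all add: SLF_add[OF \<psi>] Radd RN rcoord_dual_add[OF c2 k] fN k)
  qed
  finally show ?thesis .
qed

lemma rptrace_eq_coord_trace:
  assumes c: "rcoord scA scM act N e \<beta> \<beta>c" and \<psi>: "\<psi> \<in> SLF scA"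
    and N0: "0 \<in> N" and Nadd: "\<And>x y. x \<in> N \<Longrightarrow> y \<in> N \<Longrightarrow> x + y \<in> N"
    and yN: "\<And>\<xi>. \<xi> \<in> N \<Longrightarrow> ract \<xi> y \<in> N"
    and yadd: "\<And>\<xi> \<eta>. \<xi> \<in> N \<Longrightarrow> \<eta> \<in> N \<Longrightarrow> ract (\<xi> + \<eta>) y = ract \<xi> y + ract \<eta> y"
    and yact: "\<And>a \<xi>. \<xi> \<in> N \<Longrightarrow> ract (act a \<xi>) y = act a (ract \<xi> y)"
  shows "rptrace scA scM act ract N \<psi> y = coord_trace \<psi> (\<lambda>\<xi>. ract \<xi> y) e \<beta> \<beta>c"
proof -
  define P where "P T \<longleftrightarrow> (\<exists>e \<beta> \<beta>c. rcoord scA scM act N e \<beta> \<beta>c \<and>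
      T = (\<lambda>y. \<Sum>j<length \<beta>. \<psi> ((\<beta>c ! j) (ract ((\<beta> ! j) e) y))))" for T
  have "P (SOME T. P T)"
    by (rule someI_ex[of P]) (use c in \<open>auto simp: P_def\<close>)
  then obtain e' \<beta>' \<beta>c' where c': "rcoord scA scM act N e' \<beta>' \<beta>c'"
    and tr: "rptrace scA scM act ract N \<psi> y = coord_trace \<psi> (\<lambda>\<xi>. ract \<xi> y) e' \<beta>' \<beta>c'"
    unfolding P_def rptrace_def coord_trace_def by auto
  show ?thesis
    using tr coord_trace_indep[OF c' c \<psi> N0 Nadd yN yadd yact] by simp
qed

section \<open>Existence of coordinate systems\<close>

lemma sum_orthogonal_idempotents_left_unit:
  fixes S :: "'a::ring set"
  assumes "finite S" and "\<And>e. e \<in> S \<Longrightarrow> e * e = e"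
    and "\<And>e f. e \<in> S \<Longrightarrow> f \<in> S \<Longrightarrow> e \<noteq> f \<Longrightarrow> e * f = 0" and "x \<in> S"
  shows "\<Sum>S * x = x"
proof -
  have "\<Sum>S * x = (\<Sum>s\<in>S. s * x)" by (simp add: sum_distrib_right)
  also have "\<dots> = (\<Sum>s\<in>S. if s = x then x else 0)"
    using assms by (intro sum.cong) auto
  also have "\<dots> = x" using assms(1,4) by simp
  finally show ?thesis .
qed

lemma AUF_local_left_unit:
  fixes sc :: "complex \<Rightarrow> 'a::ring \<Rightarrow> 'a" and X :: "'a set"
  assumes "AUF sc" and "finite X"
  shows "\<exists>e. e * e = e \<and> (\<forall>x\<in>X. e * x = x)"
proof -
  obtain E :: "'a set" where idem: "\<forall>e\<in>E. e * e = e"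
    and orth: "\<forall>e\<in>E. \<forall>f\<in>E. e \<noteq> f \<longrightarrow> e * f = 0"
    and decomp: "\<forall>x. \<exists>F y. finite F \<and> F \<subseteq> E \<times> E \<and> x = (\<Sum>(e, f)\<in>F. e * y e f * f)"
    using assms(1) unfolding AUF_def by (elim conjE exE) (rule that; assumption)
  from choice[OF decomp] obtain F
    where "\<forall>x. \<exists>y. finite (F x) \<and> F x \<subseteq> E \<times> E \<and> x = (\<Sum>(e, f)\<in>F x. e * y e f * f)" ..
  from choice[OF this] obtain Y
    where FY: "\<forall>x. finite (F x) \<and> F x \<subseteq> E \<times> E \<and> x = (\<Sum>(e, f)\<in>F x. e * Y x e f * f)" ..
  then have F: "\<And>x. finite (F x)" "\<And>x. F x \<subseteq> E \<times> E"
    and Y: "\<And>x. x = (\<Sum>(e, f)\<in>F x. e * Y x e f * f)"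
    by blast+
  define S where "S = (\<Union>x\<in>X. fst ` F x)"
  have "finite S" "S \<subseteq> E"
    unfolding S_def using assms(2) F by fastforce+
  then have unit: "\<Sum>S * s = s" if "s \<in> S" for s
    using idem orth that by (intro sum_orthogonal_idempotents_left_unit) auto
  have "\<Sum>S * \<Sum>S = \<Sum>S"
    by (simp add: sum_distrib_left unit)
  moreover have "\<Sum>S * x = x" if "x \<in> X" for x
  proof -
    have "\<Sum>S * x = \<Sum>S * (\<Sum>(e, f)\<in>F x. e * Y x e f * f)"
      by (simp only: Y[symmetric])
    also have "\<dots> = (\<Sum>z\<in>F x. \<Sum>S * (case z of (e, f) \<Rightarrow> e * Y x e f * f))"
      by (rule sum_distrib_left)
    also have "\<dots> = (\<Sum>(e, f)\<in>F x. e * Y x e f * f)"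
    proof (rule sum.cong[OF refl], clarify)
      fix e f assume "(e, f) \<in> F x"
      then have "e \<in> S" using that unfolding S_def by force
      then show "\<Sum>S * (e * Y x e f * f) = e * Y x e f * f"
        by (simp add: mult.assoc[symmetric] unit)
    qed
    also have "\<dots> = x" by (simp only: Y[symmetric])
    finally show ?thesis .
  qed
  ultimately show ?thesis by blast
qed

(* The free module (Ae)^G, mapped onto the submodule generated by G by tuple_combination. *)

definition ideal_tuples :: "'a::ring \<Rightarrow> 'g set \<Rightarrow> ('g \<Rightarrow> 'a) set" where
  "ideal_tuples e G = {x. (\<forall>g. x g * e = x g) \<and> (\<forall>g. g \<notin> G \<longrightarrow> x g = 0)}"

definition tuple_combination :: "('a \<Rightarrow> 'm \<Rightarrow> 'm) \<Rightarrow> 'm set \<Rightarrow> ('m \<Rightarrow> 'a) \<Rightarrow> 'm::comm_monoid_add" where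
  "tuple_combination act G x = (\<Sum>g\<in>G. act (x g) g)"

lemma lmod_ideal_tuples:
  fixes scA :: "complex \<Rightarrow> 'a::ring \<Rightarrow> 'a"
  assumes alg: "alg scA"
  shows "lmod scA (ideal_tuples e G) (\<lambda>x y g. x g + y g) (\<lambda>g. 0) (\<lambda>c x g. scA c (x g)) (\<lambda>a x g. a * x g)"
proof -
  from alg have s1: "\<And>c x y. scA c (x + y) = scA c x + scA c y"
    and s2: "\<And>c d x. scA (c + d) x = scA c x + scA d x"
    and s3: "\<And>c d x. scA (c * d) x = scA c (scA d x)" and s4: "\<And>x. scA 1 x = x"
    and s5: "\<And>c x y. scA c (x * y) = scA c x * y" and s6: "\<And>c x y. scA c (x * y) = x * scA c y"
    unfolding alg_def by metis+
  have s0: "\<And>c. scA c 0 = 0" using s1[of _ 0 0] by simp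
  have neg: "\<exists>y\<in>ideal_tuples e G. (\<lambda>g. x g + y g) = (\<lambda>g. 0)" if "x \<in> ideal_tuples e G" for x
    using that by (intro bexI[of _ "\<lambda>g. - x g"]) (auto simp: ideal_tuples_def)
  show ?thesis unfolding lmod_def
    using neg by (auto simp: ideal_tuples_def fun_eq_iff algebra_simps s0 s1 s2 s3 s4 s5[symmetric] s6[symmetric])
qed

lemma lhom_comp:
  assumes "lhom X addX scX actX Y addY scY actY f" and "lhom Y addY scY actY Z addZ scZ actZ g"
  shows "lhom X addX scX actX Z addZ scZ actZ (g \<circ> f)"
  using assms unfolding lhom_def by (auto simp: image_subset_iff)

lemma lmod_transport:
  fixes emb :: "'m::ab_group_add \<Rightarrow> 'x"
  assumes inj: "inj emb" and M: "lmod scA UNIV (+) 0 scM act"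
  shows "lmod scA (range emb) (\<lambda>u v. emb (inv emb u + inv emb v)) (emb 0)
      (\<lambda>c u. emb (scM c (inv emb u))) (\<lambda>a u. emb (act a (inv emb u)))"
    and "lhom UNIV (+) scM act (range emb) (\<lambda>u v. emb (inv emb u + inv emb v))
      (\<lambda>c u. emb (scM c (inv emb u))) (\<lambda>a u. emb (act a (inv emb u))) emb"
proof -
  have inv: "inv emb (emb \<xi>) = \<xi>" for \<xi> using inj by (simp add: inv_f_f)
  show "lhom UNIV (+) scM act (range emb) (\<lambda>u v. emb (inv emb u + inv emb v))
      (\<lambda>c u. emb (scM c (inv emb u))) (\<lambda>a u. emb (act a (inv emb u))) emb"
    unfolding lhom_def by (simp add: inv)
  show "lmod scA (range emb) (\<lambda>u v. emb (inv emb u + inv emb v)) (emb 0)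
      (\<lambda>c u. emb (scM c (inv emb u))) (\<lambda>a u. emb (act a (inv emb u)))"
    using M unfolding lmod_def by (auto simp: inv add_ac) (metis add.right_inverse)
qed

lemma lproj_section:
  fixes scM :: "complex \<Rightarrow> 'm::ab_group_add \<Rightarrow> 'm" and X :: "('m \<Rightarrow> 'a::ring) set"
  assumes proj: "lproj scA UNIV (+) 0 scM act TYPE('m \<Rightarrow> 'a)"
    and M: "lmod scA UNIV (+) 0 scM act" and X: "lmod scA X addX zX scX actX"
    and \<Phi>: "lhom X addX scX actX UNIV (+) scM act \<Phi>" and surj: "\<Phi> ` X = UNIV"
    and c: "c \<noteq> (0::'a)"
  shows "\<exists>h. lhom UNIV (+) scM act X addX scX actX h \<and> (\<forall>\<xi>. \<Phi> (h \<xi>) = \<xi>)"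
proof -
  \<comment> \<open>lproj only tests modules with carriers in 'm \<Rightarrow> 'a, so M is replaced by an isomorphic
    copy there; the embedding needs A \<noteq> 0.\<close>
  define emb :: "'m \<Rightarrow> 'm \<Rightarrow> 'a" where "emb \<xi> = (\<lambda>m. if m = \<xi> then c else 0)" for \<xi>
  have inj: "inj emb"
  proof (rule injI)
    fix \<xi> \<eta> assume "emb \<xi> = emb \<eta>"
    then have "emb \<xi> \<xi> = emb \<eta> \<xi>" by simp
    then show "\<xi> = \<eta>" using c by (simp add: emb_def split: if_splits)
  qed
  note Y = lmod_transport[OF inj M]
  have "lhom X addX scX actX (range emb) (\<lambda>u v. emb (inv emb u + inv emb v))
      (\<lambda>c u. emb (scM c (inv emb u))) (\<lambda>a u. emb (act a (inv emb u))) (emb \<circ> \<Phi>)"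
    by (rule lhom_comp[OF \<Phi> Y(2)])
  moreover have "(emb \<circ> \<Phi>) ` X = range emb"
    by (simp only: image_comp[symmetric] surj)
  ultimately obtain h where h: "lhom UNIV (+) scM act X addX scX actX h"
    and "\<forall>\<xi>\<in>UNIV. (emb \<circ> \<Phi>) (h \<xi>) = emb \<xi>"
    using proj X Y unfolding lproj_def by blast
  then have "\<Phi> (h \<xi>) = \<xi>" for \<xi> using inj by (simp add: inj_eq)
  with h show ?thesis by blast
qed

context
  fixes scA :: "complex \<Rightarrow> 'a::ring \<Rightarrow> 'a" and scM :: "complex \<Rightarrow> 'm::ab_group_add \<Rightarrow> 'm"
    and act :: "'a \<Rightarrow> 'm \<Rightarrow> 'm"
  assumes M: "lmod scA UNIV (+) 0 scM act"
begin

lemma lmod_act_add_left: "act (a + b) \<xi> = act a \<xi> + act b \<xi>"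
  using M by (simp add: lmod_def)

lemma lmod_act_add_right: "act a (\<xi> + \<eta>) = act a \<xi> + act a \<eta>"
  using M by (simp add: lmod_def)

lemma lmod_act_mult: "act (a * b) \<xi> = act a (act b \<xi>)"
  using M by (simp add: lmod_def)

lemma lmod_act_scale_left: "act (scA c a) \<xi> = scM c (act a \<xi>)"
  using M by (simp add: lmod_def)

lemma lmod_scale_add: "scM c (\<xi> + \<eta>) = scM c \<xi> + scM c \<eta>"
  using M by (simp add: lmod_def)

lemma lmod_act_zero: "act 0 \<xi> = 0"
  using lmod_act_add_left[of 0 0 \<xi>] by simp

lemma lmod_submodule:
  assumes "0 \<in> Y" and "\<And>\<xi> \<eta>. \<xi> \<in> Y \<Longrightarrow> \<eta> \<in> Y \<Longrightarrow> \<xi> + \<eta> \<in> Y"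
    and "\<And>c \<xi>. \<xi> \<in> Y \<Longrightarrow> scM c \<xi> \<in> Y" and "\<And>a \<xi>. \<xi> \<in> Y \<Longrightarrow> act a \<xi> \<in> Y"
    and "\<And>\<xi>. \<xi> \<in> Y \<Longrightarrow> - \<xi> \<in> Y"
  shows "lmod scA Y (+) 0 scM act"
  using M assms unfolding lmod_def by (auto simp: add.assoc) (metis add.right_inverse)

lemma lmod_image:
  assumes X: "lmod scA X addX zX scX actX" and \<Phi>: "lhom X addX scX actX UNIV (+) scM act \<Phi>"
  shows "lmod scA (\<Phi> ` X) (+) 0 scM act"
proof -
  from \<Phi> have add: "\<And>x y. x \<in> X \<Longrightarrow> y \<in> X \<Longrightarrow> \<Phi> (addX x y) = \<Phi> x + \<Phi> y"
    and sc: "\<And>c x. x \<in> X \<Longrightarrow> \<Phi> (scX c x) = scM c (\<Phi> x)"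
    and ac: "\<And>a x. x \<in> X \<Longrightarrow> \<Phi> (actX a x) = act a (\<Phi> x)"
    unfolding lhom_def by auto
  from X have z: "zX \<in> X" "addX zX zX = zX"
    and closed: "\<And>x y. x \<in> X \<Longrightarrow> y \<in> X \<Longrightarrow> addX x y \<in> X"
      "\<And>c x. x \<in> X \<Longrightarrow> scX c x \<in> X" "\<And>a x. x \<in> X \<Longrightarrow> actX a x \<in> X"
    and neg: "\<And>x. x \<in> X \<Longrightarrow> \<exists>y\<in>X. addX x y = zX"
    unfolding lmod_def by auto
  have \<Phi>z: "\<Phi> zX = 0"
    using add[OF z(1) z(1)] z(2) by simp
  show ?thesis
  proof (rule lmod_submodule)
    show "0 \<in> \<Phi> ` X" using \<Phi>z z(1) by force
    show "- \<xi> \<in> \<Phi> ` X" if \<xi>: "\<xi> \<in> \<Phi> ` X" for \<xi>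
    proof -
      obtain x y where "x \<in> X" "y \<in> X" "addX x y = zX" "\<xi> = \<Phi> x"
        using \<xi> neg by blast
      then have "- \<xi> = \<Phi> y" using add \<Phi>z by (metis add.inverse_unique)
      then show ?thesis using \<open>y \<in> X\<close> by blast
    qed
    show "\<xi> + \<eta> \<in> \<Phi> ` X" if \<xi>\<eta>: "\<xi> \<in> \<Phi> ` X" "\<eta> \<in> \<Phi> ` X" for \<xi> \<eta>
    proof -
      obtain x y where "x \<in> X" "y \<in> X" "\<xi> = \<Phi> x" "\<eta> = \<Phi> y"
        using \<xi>\<eta> by blast
      then show ?thesis using add closed(1) by (metis image_eqI)
    qed
    show "scM c \<xi> \<in> \<Phi> ` X" if "\<xi> \<in> \<Phi> ` X" for c \<xi>
      using that sc closed(2) by (metis image_iff)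
    show "act a \<xi> \<in> \<Phi> ` X" if "\<xi> \<in> \<Phi> ` X" for a \<xi>
      using that ac closed(3) by (metis image_iff)
  qed
qed

lemma lhom_tuple_combination:
  "lhom (ideal_tuples e G) (\<lambda>x y g. x g + y g) (\<lambda>c x g. scA c (x g)) (\<lambda>a x g. a * x g)
     UNIV (+) scM act (tuple_combination act G)"
proof -
  have "scM c (\<Sum>g\<in>G. t g) = (\<Sum>g\<in>G. scM c (t g))" for c t
    by (rule additive_on_sum[of UNIV]) (simp_all add: lmod_scale_add)
  moreover have "act a (\<Sum>g\<in>G. t g) = (\<Sum>g\<in>G. act a (t g))" for a t
    by (rule additive_on_sum[of UNIV]) (simp_all add: lmod_act_add_right)
  ultimately show ?thesis
    unfolding lhom_def tuple_combination_def
    by (simp add: lmod_act_add_left sum.distrib lmod_act_scale_left lmod_act_mult)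
qed

lemma tuple_combination_surj:
  assumes alg: "alg scA" and G: "finite G" and gen: "UNIV = gen_lmod scA scM act G"
    and e: "e * e = e" and unit: "\<And>g. g \<in> G \<Longrightarrow> act e g = g"
  shows "tuple_combination act G ` ideal_tuples e G = UNIV"
proof -
  have sub: "lmod scA (tuple_combination act G ` ideal_tuples e G) (+) 0 scM act"
    by (rule lmod_image[OF lmod_ideal_tuples[OF alg] lhom_tuple_combination])
  have "G \<subseteq> tuple_combination act G ` ideal_tuples e G"
  proof
    fix g assume g: "g \<in> G"
    define x where "x = (\<lambda>m. if m = g then e else 0)"
    have "x \<in> ideal_tuples e G"
      using e g by (auto simp: ideal_tuples_def x_def)
    moreover have "tuple_combination act G x = (\<Sum>m\<in>G. if m = g then g else 0)"
      unfolding tuple_combination_def x_def by (rule sum.cong) (simp_all add: lmod_act_zero unit g)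
    ultimately show "g \<in> tuple_combination act G ` ideal_tuples e G"
      using G g by (simp add: image_iff) (metis)
  qed
  then have "gen_lmod scA scM act G \<subseteq> tuple_combination act G ` ideal_tuples e G"
    unfolding gen_lmod_def using sub by (intro Inter_lower) simp
  then show ?thesis using gen by auto
qed

lemma rcoord_of_section:
  assumes e: "e * e = e" and gs: "distinct gs"
    and h: "lhom UNIV (+) scM act (ideal_tuples e (set gs)) (\<lambda>x y g. x g + y g) (\<lambda>c x g. scA c (x g))
      (\<lambda>a x g. a * x g) h"
    and comb_h: "\<And>\<xi>. tuple_combination act (set gs) (h \<xi>) = \<xi>"
  shows "rcoord scA scM act UNIV e (map (\<lambda>g a. act a g) gs) (map (\<lambda>g \<xi>. h \<xi> g) gs)"
  unfolding rcoord_def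
proof (intro conjI allI impI ballI)
  show "e * e = e" by (rule e)
  show "length (map (\<lambda>g a. act a g) gs) = length (map (\<lambda>g \<xi>. h \<xi> g) gs)" by simp
next
  fix j assume "j < length (map (\<lambda>g a. act a g) gs)"
  then have j: "j < length gs" by simp
  show "lhom (left_ideal e) (+) scA (*) UNIV (+) scM act (map (\<lambda>g a. act a g) gs ! j)"
    by (simp add: lhom_def j lmod_act_add_left lmod_act_scale_left lmod_act_mult)
  have "h \<xi> g \<in> left_ideal e" for \<xi> g
  proof -
    have "h \<xi> g * e = h \<xi> g"
      using h unfolding lhom_def ideal_tuples_def by blast
    then show ?thesis by (metis (mono_tags, lifting) mem_Collect_eq)
  qed
  then show "lhom UNIV (+) scM act (left_ideal e) (+) scA (*) (map (\<lambda>g \<xi>. h \<xi> g) gs ! j)"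
    using h j by (auto simp: lhom_def)
next
  fix \<xi> :: 'm
  have "(\<Sum>j<length (map (\<lambda>g a. act a g) gs). (map (\<lambda>g a. act a g) gs ! j) ((map (\<lambda>g \<xi>. h \<xi> g) gs ! j) \<xi>))
      = sum_list (map (\<lambda>g. act (h \<xi> g) g) gs)"
    by (simp add: sum_list_sum_nth atLeast0LessThan)
  also have "\<dots> = \<xi>"
    using gs comb_h by (simp add: sum_list_distinct_conv_sum_set tuple_combination_def)
  finally show "(\<Sum>j<length (map (\<lambda>g a. act a g) gs). (map (\<lambda>g a. act a g) gs ! j)
      ((map (\<lambda>g \<xi>. h \<xi> g) gs ! j) \<xi>)) = \<xi>" .
qed

lemma quasicoherent_local_unit:
  assumes "AUF scA" and "quasicoherent act UNIV" and "finite G"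
  shows "\<exists>e. e * e = e \<and> (\<forall>g\<in>G. act e g = g)"
proof -
  have "\<forall>\<xi>. \<exists>a. act a \<xi> = \<xi>"
    using assms(2) by (simp add: quasicoherent_def)
  from choice[OF this] obtain u where u: "\<forall>\<xi>. act (u \<xi>) \<xi> = \<xi>" ..
  obtain e where e: "e * e = e" "\<forall>x\<in>u ` G. e * x = x"
    using AUF_local_left_unit[OF assms(1) finite_imageI[OF assms(3)]] by blast
  have "act e g = g" if "g \<in> G" for g
  proof -
    have "act e g = act (e * u g) g"
      by (simp add: lmod_act_mult u)
    also have "\<dots> = g" using e(2) that u by simp
    finally show ?thesis .
  qed
  with e(1) show ?thesis by blast
qed

end

lemma coherent_projective_rcoord_exists:
  fixes scA :: "complex \<Rightarrow> 'a::ring \<Rightarrow> 'a" and scM :: "complex \<Rightarrow> 'm::ab_group_add \<Rightarrow> 'm"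
  assumes AUF: "AUF scA" and coh: "coherent scA scM act UNIV"
    and proj: "lproj scA UNIV (+) 0 scM act TYPE('m \<Rightarrow> 'a)"
  shows "\<exists>e \<beta> \<beta>c. rcoord scA scM act UNIV e \<beta> \<beta>c"
proof -
  have M: "lmod scA UNIV (+) 0 scM act" and qc: "quasicoherent act UNIV"
    using coh by (simp_all add: coherent_def)
  show ?thesis
  proof (cases "\<exists>c::'a. c \<noteq> 0")
    case False
    have "\<xi> = 0" for \<xi> :: 'm
    proof -
      obtain a where "act a \<xi> = \<xi>"
        using qc by (auto simp: quasicoherent_def)
      moreover have "a = 0" using False by blast
      ultimately show ?thesis by (simp add: lmod_act_zero[OF M])
    qed
    then have "rcoord scA scM act UNIV 0 [] []"
      by (simp add: rcoord_def)
    then show ?thesis by blast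
  next
    case True
    then obtain c :: 'a where c: "c \<noteq> 0" by blast
    obtain G where G: "finite G" and gen: "UNIV = gen_lmod scA scM act G"
      using coh unfolding coherent_def by blast
    obtain e where e: "e * e = e" and unit: "\<And>g. g \<in> G \<Longrightarrow> act e g = g"
      using quasicoherent_local_unit[OF M AUF qc G] by blast
    have alg: "alg scA" using AUF by (simp add: AUF_def)
    obtain h where h: "lhom UNIV (+) scM act (ideal_tuples e G) (\<lambda>x y g. x g + y g)
        (\<lambda>c x g. scA c (x g)) (\<lambda>a x g. a * x g) h"
      and comb_h: "\<And>\<xi>. tuple_combination act G (h \<xi>) = \<xi>"
      using lproj_section[OF proj M lmod_ideal_tuples[OF alg] lhom_tuple_combination[OF M]
          tuple_combination_surj[OF M alg G gen e unit] c] by blast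
    obtain gs where gs: "set gs = G" "distinct gs"
      using finite_distinct_list[OF G] by blast
    show ?thesis
      using rcoord_of_section[OF M e gs(2)] h comb_h gs(1) by blast
  qed
qed

section \<open>Cutting down by an idempotent of B\<close>

abbreviation right_corner :: "('m \<Rightarrow> 'b \<Rightarrow> 'm) \<Rightarrow> 'b \<Rightarrow> 'm set" where
  "right_corner ract p \<equiv> {ract \<xi> p | \<xi>. True}"

context
  fixes scA :: "complex \<Rightarrow> 'a::ring \<Rightarrow> 'a" and scB :: "complex \<Rightarrow> 'b::ring_1 \<Rightarrow> 'b"
    and scM :: "complex \<Rightarrow> 'm::ab_group_add \<Rightarrow> 'm"
    and act :: "'a \<Rightarrow> 'm \<Rightarrow> 'm" and ract :: "'m \<Rightarrow> 'b \<Rightarrow> 'm"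
  assumes bm: "bimod scA scB scM act ract"
begin

lemma bimod_ract_ract: "ract (ract \<xi> b) b' = ract \<xi> (b * b')"
  using bm by (simp add: bimod_def)

lemma bimod_ract_add: "ract (\<xi> + \<eta>) b = ract \<xi> b + ract \<eta> b"
  using bm by (simp add: bimod_def)

lemma bimod_ract_scale: "ract (scM c \<xi>) b = scM c (ract \<xi> b)"
  using bm by (simp add: bimod_def)

lemma bimod_ract_act: "ract (act a \<xi>) b = act a (ract \<xi> b)"
  using bm by (simp add: bimod_def)

lemma bimod_ract_sum: "ract (\<Sum>i\<in>I. t i) b = (\<Sum>i\<in>I. ract (t i) b)"
  by (rule additive_on_sum[of UNIV]) (simp_all add: bimod_ract_add)

lemma rptrace_bimod_eq_coord_trace:
  assumes "rcoord scA scM act N e \<beta> \<beta>c" and "\<psi> \<in> SLF scA"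
    and "0 \<in> N" and "\<And>x y. x \<in> N \<Longrightarrow> y \<in> N \<Longrightarrow> x + y \<in> N"
    and "\<And>\<xi>. \<xi> \<in> N \<Longrightarrow> ract \<xi> y \<in> N"
  shows "rptrace scA scM act ract N \<psi> y = coord_trace \<psi> (\<lambda>\<xi>. ract \<xi> y) e \<beta> \<beta>c"
  using assms by (rule rptrace_eq_coord_trace) (simp_all add: bimod_ract_add bimod_ract_act)

lemma right_corner_zero: "0 \<in> right_corner ract p"
proof -
  have "ract 0 p = 0" using bimod_ract_add[of 0 0 p] by simp
  then show ?thesis by (metis (mono_tags, lifting) mem_Collect_eq)
qed

lemma right_corner_add:
  "\<xi> \<in> right_corner ract p \<Longrightarrow> \<eta> \<in> right_corner ract p \<Longrightarrow> \<xi> + \<eta> \<in> right_corner ract p"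
  by (auto simp: bimod_ract_add[symmetric])

lemma right_corner_fixed: "p * p = p \<Longrightarrow> \<xi> \<in> right_corner ract p \<Longrightarrow> ract \<xi> p = \<xi>"
  by (auto simp: bimod_ract_ract)

lemma right_corner_ract: "y * p = y \<Longrightarrow> ract \<xi> y \<in> right_corner ract p"
  by (metis (mono_tags, lifting) bimod_ract_ract mem_Collect_eq)

lemma rcoord_right_corner:
  assumes p: "p * p = p" and c: "rcoord scA scM act UNIV e \<beta> \<beta>c"
  shows "rcoord scA scM act (right_corner ract p) e (map (\<lambda>\<phi> a. ract (\<phi> a) p) \<beta>) \<beta>c"
  unfolding rcoord_def
proof (intro conjI allI impI ballI)
  show "e * e = e" by (rule rcoord_idem[OF c])
  show "length (map (\<lambda>\<phi> a. ract (\<phi> a) p) \<beta>) = length \<beta>c"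
    using c by (simp add: rcoord_def)
next
  fix j assume "j < length (map (\<lambda>\<phi> a. ract (\<phi> a) p) \<beta>)"
  then have j: "j < length \<beta>" by simp
  show "lhom (left_ideal e) (+) scA (*) (right_corner ract p) (+) scM act
      (map (\<lambda>\<phi> a. ract (\<phi> a) p) \<beta> ! j)"
    using rcoord_coord_lhom[OF c j]
    by (auto simp: lhom_def j bimod_ract_add bimod_ract_scale bimod_ract_act)
  show "lhom (right_corner ract p) (+) scM act (left_ideal e) (+) scA (*) (\<beta>c ! j)"
    using rcoord_dual_lhom[OF c j] unfolding lhom_def by blast
next
  fix \<xi> assume \<xi>: "\<xi> \<in> right_corner ract p"
  have "(\<Sum>j<length (map (\<lambda>\<phi> a. ract (\<phi> a) p) \<beta>). (map (\<lambda>\<phi> a. ract (\<phi> a) p) \<beta> ! j) ((\<beta>c ! j) \<xi>))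
      = ract (\<Sum>j<length \<beta>. (\<beta> ! j) ((\<beta>c ! j) \<xi>)) p"
    by (simp add: bimod_ract_sum)
  also have "\<dots> = \<xi>"
    by (simp add: rcoord_reconstruct[OF c] right_corner_fixed[OF p \<xi>])
  finally show "(\<Sum>j<length (map (\<lambda>\<phi> a. ract (\<phi> a) p) \<beta>).
      (map (\<lambda>\<phi> a. ract (\<phi> a) p) \<beta> ! j) ((\<beta>c ! j) \<xi>)) = \<xi>" .
qed

end

theorem proposition8p8:
  fixes scA :: "complex \<Rightarrow> 'a::ring \<Rightarrow> 'a"
    and scB :: "complex \<Rightarrow> 'b::ring_1 \<Rightarrow> 'b"
    and scM :: "complex \<Rightarrow> 'm::ab_group_add \<Rightarrow> 'm"
    and act :: "'a \<Rightarrow> 'm \<Rightarrow> 'm"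
    and ract :: "'m \<Rightarrow> 'b \<Rightarrow> 'm"
    and p :: 'b
    and \<psi> :: "'a \<Rightarrow> complex"
  assumes "AUF scA"
    and "alg scB"
    and "bimod scA scB scM act ract"
    and "coherent scA scM act UNIV"
    and "lproj scA UNIV (+) 0 scM act TYPE('m \<Rightarrow> 'a)"
    and "p * p = p"
    and "\<psi> \<in> SLF scA"
  shows "\<forall>y \<in> {p * b * p | b. True}.
           rptrace scA scM act ract {ract \<xi> p | \<xi>. True} \<psi> y = rptrace scA scM act ract UNIV \<psi> y"
proof
  note bm = assms(3) and p = assms(6) and \<psi> = assms(7)
  fix y assume "y \<in> {p * b * p | b. True}"
  then obtain b where y: "y = p * b * p" by blast
  have py: "p * y = y" using p by (simp add: y mult.assoc[symmetric])
  have yp: "y * p = y" using p by (simp add: y mult.assoc)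
  obtain e \<beta> \<beta>c where c: "rcoord scA scM act UNIV e \<beta> \<beta>c"
    using coherent_projective_rcoord_exists[OF assms(1,4,5)] by blast
  have "rptrace scA scM act ract (right_corner ract p) \<psi> y
      = coord_trace \<psi> (\<lambda>\<xi>. ract \<xi> y) e (map (\<lambda>\<phi> a. ract (\<phi> a) p) \<beta>) \<beta>c"
    by (rule rptrace_bimod_eq_coord_trace[OF bm rcoord_right_corner[OF bm p c] \<psi>
          right_corner_zero[OF bm] right_corner_add[OF bm] right_corner_ract[OF bm yp]])
  also have "\<dots> = coord_trace \<psi> (\<lambda>\<xi>. ract \<xi> y) e \<beta> \<beta>c"
    by (simp add: coord_trace_def bimod_ract_ract[OF bm] py)
  also have "\<dots> = rptrace scA scM act ract UNIV \<psi> y"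
    by (rule rptrace_bimod_eq_coord_trace[OF bm c \<psi>, symmetric]) simp_all
  finally show "rptrace scA scM act ract (right_corner ract p) \<psi> y = rptrace scA scM act ract UNIV \<psi> y" .
qed

end
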